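(* If $H$ is a disjoint union of $n$ cycles (each of length at least $3$) having $20$ vertices in total, with adjacency matrix $A$, then the matrix $B(H)=-\frac4{15}A+I+\frac7{45}(J-I-A)$ has rank $21-n$.
   Context: $I$ is the identity matrix and $J$ the all-ones $20\times20$ matrix. *)

theory Defs
  imports "HOL-Analysis.Analysis"
begin

definition is_disjoint_union_of_cycles :: "('v \<Rightarrow> 'v \<Rightarrow> bool) \<Rightarrow> nat \<Rightarrow> bool" where
  "is_disjoint_union_of_cycles E n \<longleftrightarrow>
     (\<exists>(c :: nat \<Rightarrow> nat \<Rightarrow> 'v) (len :: nat \<Rightarrow> nat).
        (\<forall>i<n. 3 \<le> len i \<and> inj_on (c i) {0..<len i}) \<and>
        (\<forall>i<n. \<forall>j<n. i \<noteq> j \<longrightarrow> c i ` {0..<len i} \<inter> c j ` {0..<len j} = {}) \<and>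
        (\<Union>i<n. c i ` {0..<len i}) = UNIV \<and>
        (\<forall>u v. E u v \<longleftrightarrow>
           (\<exists>i<n. \<exists>k<len i. {u, v} = {c i k, c i ((k + 1) mod len i)})))"

definition adjacency_matrix :: "('v::finite \<Rightarrow> 'v \<Rightarrow> bool) \<Rightarrow> real^'v^'v" where
  "adjacency_matrix E = (\<chi> i j. if E i j then 1 else 0)"

definition all_ones :: "real^'v::finite^'v" where
  "all_ones = (\<chi> i j. 1)"

end

theory Submission
  imports Defs
begin

text \<open>Up to the factor 1/45 the matrix is 7 J + 19 L, where L = 2 I - A is the Laplacian of
the 2-regular graph H. Since the columns of L sum to zero, a kernel vector x of 7 J + 19 L has
coordinate sum zero, hence L x = 0; and x \<bullet> L x is the sum of (x u - x v)^2 over the edges, so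
x is constant on every cycle. The kernel therefore consists of the vectors constant on the
cycles with coordinate sum zero, a space of dimension n - 1, and rank-nullity gives
rank 20 - (n - 1) = 21 - n.\<close>

lemma matrix_vector_mult_component_row: "(A *v x) $ i = row i A \<bullet> x"
  for A :: "real^'n^'m"
  by (simp add: matrix_vector_mult_def row_def inner_vec_def mult.commute)

lemma scaleR_matrix_vector_mult: "(r *\<^sub>R A) *v x = r *\<^sub>R (A *v x)"
  for A :: "real^'n^'m"
  by (simp add: vec_eq_iff matrix_vector_mult_def sum_distrib_left mult.assoc)

lemma rank_nullity:
  fixes A :: "real^'n^'m"
  shows "rank A + dim {x. A *v x = 0} = CARD('n)"
proof -
  have null_space: "{x. A *v x = 0} = {y \<in> UNIV. \<forall>r \<in> span (rows A). orthogonal r y}"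
  proof safe
    fix x r assume "A *v x = 0" "r \<in> span (rows A)"
    then have "row i A \<bullet> x = 0" for i
      by (metis matrix_vector_mult_component_row zero_index)
    then have "orthogonal x r"
      using \<open>r \<in> span (rows A)\<close>
      by (intro orthogonal_to_span[of r "rows A" x]) (auto simp: rows_def orthogonal_def inner_commute)
    then show "orthogonal r x"
      by (simp add: orthogonal_commute)
  next
    fix x assume "\<forall>r \<in> span (rows A). orthogonal r x"
    then show "A *v x = 0"
      by (auto simp: vec_eq_iff matrix_vector_mult_component_row orthogonal_def rows_def
          intro!: span_base)
  qed simp
  have "dim {y \<in> UNIV. \<forall>r \<in> span (rows A). orthogonal r y} + dim (span (rows A))
      = dim (UNIV :: (real^'n) set)"
    by (rule dim_subspace_orthogonal_to_vectors) auto
  then show ?thesis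
    by (simp add: null_space row_rank_def)
qed

lemma mod_add_pred_Suc_mod: "0 < L \<Longrightarrow> (p::nat) < L \<Longrightarrow> ((p + L - 1) mod L + 1) mod L = p"
  by (cases p) (auto simp: mod_Suc)

lemma Suc_mod_add_pred_mod: "0 < L \<Longrightarrow> (p::nat) < L \<Longrightarrow> ((p + 1) mod L + L - 1) mod L = p"
  by (cases "p + 1 = L") (auto simp: mod_Suc)

lemma Suc_mod_neq_add_pred_mod:
  assumes "(p::nat) < L" "3 \<le> L"
  shows "(p + 1) mod L \<noteq> (p + L - 1) mod L"
proof (cases "p + 1 = L")
  case True
  then have "p + L - 1 = (L - 2) + L"
    using assms by simp
  then have "(p + L - 1) mod L = (L - 2) mod L"
    by simp
  then have "(p + L - 1) mod L = L - 2"
    using assms by simp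
  then show ?thesis
    using True assms by auto
next
  case False
  then have "(p + 1) mod L = p + 1"
    using assms by simp
  moreover have "(p + L - 1) mod L = (if p = 0 then L - 1 else p - 1)"
    using assms by (cases p) auto
  ultimately show ?thesis
    using assms by auto
qed

locale cycle_decomposition =
  fixes E :: "'v::finite \<Rightarrow> 'v \<Rightarrow> bool" and n :: nat
    and c :: "nat \<Rightarrow> nat \<Rightarrow> 'v" and len :: "nat \<Rightarrow> nat"
  assumes len_ge_3: "\<And>i. i < n \<Longrightarrow> 3 \<le> len i"
    and inj_cycle: "\<And>i. i < n \<Longrightarrow> inj_on (c i) {0..<len i}"
    and disjoint_cycles: "\<And>i j. i < n \<Longrightarrow> j < n \<Longrightarrow> i \<noteq> j
      \<Longrightarrow> c i ` {0..<len i} \<inter> c j ` {0..<len j} = {}"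
    and cycles_cover: "(\<Union>i<n. c i ` {0..<len i}) = UNIV"
    and adjacent_iff: "\<And>u v. E u v
      \<longleftrightarrow> (\<exists>i<n. \<exists>k<len i. {u, v} = {c i k, c i ((k + 1) mod len i)})"
begin

definition cycle_of :: "'v \<Rightarrow> nat" where
  "cycle_of v = (SOME i. i < n \<and> v \<in> c i ` {0..<len i})"

definition cycle_pos :: "'v \<Rightarrow> nat" where
  "cycle_pos v = (SOME k. k < len (cycle_of v) \<and> c (cycle_of v) k = v)"

lemma cycle_of: "cycle_of v < n" "v \<in> c (cycle_of v) ` {0..<len (cycle_of v)}"
proof -
  have "\<exists>i. i < n \<and> v \<in> c i ` {0..<len i}"
    using cycles_cover by blast
  then show "cycle_of v < n" "v \<in> c (cycle_of v) ` {0..<len (cycle_of v)}"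
    unfolding cycle_of_def by (metis (mono_tags, lifting) someI_ex)+
qed

lemma cycle_pos: "cycle_pos v < len (cycle_of v)" "c (cycle_of v) (cycle_pos v) = v"
proof -
  have "\<exists>k. k < len (cycle_of v) \<and> c (cycle_of v) k = v"
    using cycle_of(2)[of v] by auto
  then show "cycle_pos v < len (cycle_of v)" "c (cycle_of v) (cycle_pos v) = v"
    unfolding cycle_pos_def by (metis (mono_tags, lifting) someI_ex)+
qed

lemma len_cycle_of_ge_3: "3 \<le> len (cycle_of v)"
  using len_ge_3 cycle_of(1) by blast

lemma cycle_vertex_eq_iff:
  assumes "i < n" "j < n" "k < len i" "m < len j"
  shows "c i k = c j m \<longleftrightarrow> i = j \<and> k = m"
proof
  assume eq: "c i k = c j m"
  have "i = j"
    using disjoint_cycles[OF assms(1,2)] eq assms(3,4) by fastforce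
  then show "i = j \<and> k = m"
    using inj_cycle[OF assms(1)] eq assms(3,4) by (auto dest: inj_onD)
qed simp

lemma cycle_of_vertex: "i < n \<Longrightarrow> k < len i \<Longrightarrow> cycle_of (c i k) = i"
  and cycle_pos_vertex: "i < n \<Longrightarrow> k < len i \<Longrightarrow> cycle_pos (c i k) = k"
  using cycle_vertex_eq_iff[where i = "cycle_of (c i k)" and k = "cycle_pos (c i k)" and j = i and m = k]
    cycle_of(1) cycle_pos[of "c i k"]
  by auto

definition cycle_next :: "'v \<Rightarrow> 'v" where
  "cycle_next v = c (cycle_of v) ((cycle_pos v + 1) mod len (cycle_of v))"

definition cycle_prev :: "'v \<Rightarrow> 'v" where
  "cycle_prev v = c (cycle_of v) ((cycle_pos v + len (cycle_of v) - 1) mod len (cycle_of v))"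

lemma cycle_of_next: "cycle_of (cycle_next v) = cycle_of v"
  and cycle_pos_next: "cycle_pos (cycle_next v) = (cycle_pos v + 1) mod len (cycle_of v)"
  using cycle_of_vertex cycle_pos_vertex cycle_of(1) len_cycle_of_ge_3[of v]
  unfolding cycle_next_def by auto

lemma cycle_of_prev: "cycle_of (cycle_prev v) = cycle_of v"
  and cycle_pos_prev: "cycle_pos (cycle_prev v) = (cycle_pos v + len (cycle_of v) - 1) mod len (cycle_of v)"
  using cycle_of_vertex cycle_pos_vertex cycle_of(1) len_cycle_of_ge_3[of v]
  unfolding cycle_prev_def by auto

lemma cycle_next_prev [simp]: "cycle_next (cycle_prev v) = v"
  using mod_add_pred_Suc_mod[OF _ cycle_pos(1)] len_cycle_of_ge_3[of v] cycle_pos(2)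
  unfolding cycle_next_def[of "cycle_prev v"] cycle_of_prev cycle_pos_prev by simp

lemma cycle_prev_next [simp]: "cycle_prev (cycle_next v) = v"
  using Suc_mod_add_pred_mod[OF _ cycle_pos(1)] len_cycle_of_ge_3[of v] cycle_pos(2)
  unfolding cycle_prev_def[of "cycle_next v"] cycle_of_next cycle_pos_next by simp

lemma cycle_next_neq_prev: "cycle_next v \<noteq> cycle_prev v"
  using Suc_mod_neq_add_pred_mod[OF cycle_pos(1) len_cycle_of_ge_3, of v]
  by (metis cycle_pos_next cycle_pos_prev)

lemma adjacent_iff_next_or_prev: "E u w \<longleftrightarrow> w = cycle_next u \<or> w = cycle_prev u"
proof
  assume "E u w"
  then obtain i k where ik: "i < n" "k < len i" and uw: "{u, w} = {c i k, c i ((k + 1) mod len i)}"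
    using adjacent_iff by blast
  have "cycle_next (c i k) = c i ((k + 1) mod len i)"
    unfolding cycle_next_def using cycle_of_vertex[OF ik] cycle_pos_vertex[OF ik] by simp
  then have "{u, w} = {c i k, cycle_next (c i k)}"
    using uw by simp
  then show "w = cycle_next u \<or> w = cycle_prev u"
    by (auto simp: doubleton_eq_iff)
next
  have edge_next: "E v (cycle_next v)" for v
    unfolding adjacent_iff cycle_next_def
    using cycle_of(1) cycle_pos by (metis insert_commute)
  have "E (cycle_prev u) u"
    using edge_next[of "cycle_prev u"] by simp
  then have "E u (cycle_prev u)"
    by (simp add: adjacent_iff insert_commute)
  moreover assume "w = cycle_next u \<or> w = cycle_prev u"
  ultimately show "E u w"
    using edge_next[of u] by auto
qed

lemma sum_cycle_next: "(\<Sum>u\<in>UNIV. f (cycle_next u)) = (\<Sum>u\<in>UNIV. f u)"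
  by (rule sum.reindex_bij_witness[of _ cycle_prev cycle_next]) auto

lemma sum_cycle_prev: "(\<Sum>u\<in>UNIV. f (cycle_prev u)) = (\<Sum>u\<in>UNIV. f u)"
  by (rule sum.reindex_bij_witness[of _ cycle_next cycle_prev]) auto

lemma adjacency_matrix_mult:
  "(adjacency_matrix E *v x) $ u = x $ cycle_next u + x $ cycle_prev u"
proof -
  have "(adjacency_matrix E *v x) $ u = (\<Sum>w\<in>UNIV. if E u w then x $ w else 0)"
    by (auto simp: matrix_vector_mult_def adjacency_matrix_def intro!: sum.cong)
  also have "\<dots> = (\<Sum>w\<in>{w. E u w}. x $ w)"
    using sum.inter_filter[of UNIV "\<lambda>w. x $ w" "E u"] by simp
  also have "{w. E u w} = {cycle_next u, cycle_prev u}"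
    using adjacent_iff_next_or_prev by auto
  finally show ?thesis
    using cycle_next_neq_prev by simp
qed

lemma all_ones_mult: "(all_ones *v x) $ u = (\<Sum>w\<in>UNIV. x $ w)"
  by (simp add: matrix_vector_mult_def all_ones_def)

text \<open>D - A with D = 2 I, since every vertex has degree 2.\<close>

definition laplacian :: "real^'v^'v" where
  "laplacian = 2 *\<^sub>R mat 1 - adjacency_matrix E"

lemma laplacian_mult:
  "(laplacian *v x) $ u = 2 * x $ u - x $ cycle_next u - x $ cycle_prev u"
  by (simp add: laplacian_def matrix_vector_mult_diff_rdistrib scaleR_matrix_vector_mult
      adjacency_matrix_mult)

lemma sum_laplacian_mult: "(\<Sum>u\<in>UNIV. (laplacian *v x) $ u) = 0"
  by (simp add: laplacian_mult sum_subtractf sum_distrib_left[symmetric]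
      sum_cycle_next[of "($) x"] sum_cycle_prev[of "($) x"])

lemma inner_laplacian_mult: "x \<bullet> (laplacian *v x) = (\<Sum>u\<in>UNIV. (x $ u - x $ cycle_next u)\<^sup>2)"
proof -
  have "(\<Sum>u\<in>UNIV. x $ u * x $ cycle_prev u) = (\<Sum>u\<in>UNIV. x $ cycle_next u * x $ u)"
    using sum_cycle_next[of "\<lambda>u. x $ u * x $ cycle_prev u"] by simp
  moreover have "(\<Sum>u\<in>UNIV. (x $ cycle_next u)\<^sup>2) = (\<Sum>u\<in>UNIV. (x $ u)\<^sup>2)"
    by (rule sum_cycle_next)
  ultimately show ?thesis
    by (simp add: inner_vec_def laplacian_mult power2_diff algebra_simps power2_eq_square
        sum.distrib sum_subtractf sum_distrib_left)
qed

lemma laplacian_mult_eq_0_iff: "laplacian *v x = 0 \<longleftrightarrow> (\<forall>v. x $ cycle_next v = x $ v)"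
proof
  assume "laplacian *v x = 0"
  then have "(\<Sum>u\<in>UNIV. (x $ u - x $ cycle_next u)\<^sup>2) = 0"
    using inner_laplacian_mult[of x] by simp
  then show "\<forall>v. x $ cycle_next v = x $ v"
    by (simp add: sum_nonneg_eq_0_iff)
next
  assume "\<forall>v. x $ cycle_next v = x $ v"
  moreover from this have "x $ cycle_prev v = x $ v" for v
    by (metis cycle_next_prev)
  ultimately show "laplacian *v x = 0"
    by (simp add: vec_eq_iff laplacian_mult)
qed

lemma null_space_ones_laplacian:
  assumes "a \<noteq> 0" "b \<noteq> 0"
  shows "(a *\<^sub>R all_ones + b *\<^sub>R laplacian) *v x = 0
    \<longleftrightarrow> (\<forall>v. x $ cycle_next v = x $ v) \<and> (\<Sum>u\<in>UNIV. x $ u) = 0"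
    (is "?M *v x = 0 \<longleftrightarrow> _ \<and> ?s = 0")
proof -
  have component: "(?M *v x) $ u = a * ?s + b * (laplacian *v x) $ u" for u
    by (simp add: matrix_vector_mult_add_rdistrib scaleR_matrix_vector_mult all_ones_mult)
  have "(\<Sum>u\<in>UNIV. (?M *v x) $ u) = a * of_nat CARD('v) * ?s"
    by (simp add: component sum.distrib sum_distrib_left[symmetric] sum_laplacian_mult)
  then have "?M *v x = 0 \<Longrightarrow> ?s = 0"
    using assms by simp
  then have "?M *v x = 0 \<longleftrightarrow> laplacian *v x = 0 \<and> ?s = 0"
    using assms by (auto simp: vec_eq_iff component)
  then show ?thesis
    by (simp add: laplacian_mult_eq_0_iff)
qed

definition cycle_constant :: "(real^'v) set" where
  "cycle_constant = {x. \<forall>v. x $ cycle_next v = x $ v}"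

definition cycle_indicator :: "nat \<Rightarrow> real^'v" where
  "cycle_indicator i = (\<chi> v. if cycle_of v = i then 1 else 0)"

lemma subspace_cycle_constant: "subspace cycle_constant"
  unfolding subspace_def cycle_constant_def by simp

lemma cycle_constant_eq_first:
  assumes "x \<in> cycle_constant"
  shows "x $ v = x $ c (cycle_of v) 0"
proof -
  have along_cycle: "x $ c i k = x $ c i 0" if "i < n" "k < len i" for i k
    using that(2)
  proof (induction k)
    case (Suc k)
    have "cycle_next (c i k) = c i (Suc k)"
      unfolding cycle_next_def using cycle_of_vertex cycle_pos_vertex that(1) Suc.prems by simp
    moreover have "x $ cycle_next (c i k) = x $ c i k"
      using assms by (simp add: cycle_constant_def)
    ultimately have "x $ c i (Suc k) = x $ c i k"
      by simp
    then show ?case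
      using Suc by simp
  qed simp
  have "x $ v = x $ c (cycle_of v) (cycle_pos v)"
    by (simp add: cycle_pos(2))
  also have "\<dots> = x $ c (cycle_of v) 0"
    using along_cycle cycle_of(1) cycle_pos(1) by blast
  finally show ?thesis .
qed

lemma cycle_indicator_first: "i < n \<Longrightarrow> j < n \<Longrightarrow> cycle_indicator j $ c i 0 = (if i = j then 1 else 0)"
  using cycle_of_vertex[of i 0] len_ge_3[of i] unfolding cycle_indicator_def by simp

lemma cycle_constant_eq_span: "cycle_constant = span (cycle_indicator ` {..<n})"
proof
  show "span (cycle_indicator ` {..<n}) \<subseteq> cycle_constant"
    using subspace_cycle_constant
    by (intro span_minimal) (auto simp: cycle_constant_def cycle_indicator_def cycle_of_next)
next
  show "cycle_constant \<subseteq> span (cycle_indicator ` {..<n})"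
  proof
    fix x assume x: "x \<in> cycle_constant"
    have "(\<Sum>i<n. x $ c i 0 *\<^sub>R cycle_indicator i) $ v = x $ v" for v
    proof -
      have "(\<Sum>i<n. x $ c i 0 *\<^sub>R cycle_indicator i) $ v
          = (\<Sum>i<n. if i = cycle_of v then x $ c i 0 else 0)"
        unfolding sum_component cycle_indicator_def by (intro sum.cong) auto
      also have "\<dots> = x $ v"
        using cycle_of(1)[of v] cycle_constant_eq_first[OF x, of v] by simp
      finally show ?thesis .
    qed
    then have "x = (\<Sum>i<n. x $ c i 0 *\<^sub>R cycle_indicator i)"
      by (simp add: vec_eq_iff)
    also have "\<dots> \<in> span (cycle_indicator ` {..<n})"
      by (intro span_sum span_mul span_base) auto
    finally show "x \<in> span (cycle_indicator ` {..<n})" .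
  qed
qed

lemma inj_on_cycle_indicator: "inj_on cycle_indicator {..<n}"
proof
  fix i j assume "i \<in> {..<n}" "j \<in> {..<n}" "cycle_indicator i = cycle_indicator j"
  then show "i = j"
    using cycle_indicator_first[of i i] cycle_indicator_first[of i j] by (auto split: if_splits)
qed

lemma independent_cycle_indicator: "independent (cycle_indicator ` {..<n})"
  unfolding independent_explicit
proof (intro conjI allI impI ballI)
  fix w v assume sum0: "(\<Sum>v\<in>cycle_indicator ` {..<n}. w v *\<^sub>R v) = 0"
    and "v \<in> cycle_indicator ` {..<n}"
  then obtain j where j: "j < n" "v = cycle_indicator j"
    by auto
  have "(\<Sum>i<n. w (cycle_indicator i) *\<^sub>R cycle_indicator i) $ c j 0 = 0"
    using sum0 by (simp add: sum.reindex[OF inj_on_cycle_indicator])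
  then show "w v = 0"
    using j cycle_indicator_first[OF j(1)] by (simp add: sum_component if_distrib cong: if_cong)
qed simp

lemma dim_cycle_constant: "dim cycle_constant = n"
  unfolding cycle_constant_eq_span dim_span dim_eq_card_independent[OF independent_cycle_indicator]
  using card_image[OF inj_on_cycle_indicator] by simp

lemma dim_null_space_ones_laplacian:
  assumes "a \<noteq> 0" "b \<noteq> 0"
  shows "dim {x. (a *\<^sub>R all_ones + b *\<^sub>R laplacian) *v x = 0} + 1 = n"
proof -
  let ?one = "\<chi> v. 1 :: real^'v"
  have "{x. (a *\<^sub>R all_ones + b *\<^sub>R laplacian) *v x = 0}
      = {y \<in> cycle_constant. \<forall>x \<in> span {?one}. orthogonal x y}"
    by (auto simp: null_space_ones_laplacian[OF assms] cycle_constant_def span_singleton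
        orthogonal_def inner_vec_def sum_distrib_left[symmetric] dest: spec[where x = 1])
  moreover have "span {?one} \<subseteq> cycle_constant"
    by (rule span_minimal) (simp_all add: subspace_cycle_constant, simp add: cycle_constant_def)
  then have "dim {y \<in> cycle_constant. \<forall>x \<in> span {?one}. orthogonal x y} + dim (span {?one})
      = dim cycle_constant"
    by (rule dim_subspace_orthogonal_to_vectors[OF subspace_span subspace_cycle_constant])
  moreover have "dim (span {?one}) = 1"
    by (simp add: vec_eq_iff)
  ultimately show ?thesis
    by (simp add: dim_cycle_constant)
qed

lemma rank_ones_laplacian:
  assumes "a \<noteq> 0" "b \<noteq> 0"
  shows "rank (a *\<^sub>R all_ones + b *\<^sub>R laplacian) = CARD('v) + 1 - n"
  using rank_nullity[of "a *\<^sub>R all_ones + b *\<^sub>R laplacian"] dim_null_space_ones_laplacian[OF assms]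
  by simp

end

lemma cycle_decomposition_if_disjoint_union_of_cycles:
  fixes E :: "'v::finite \<Rightarrow> 'v \<Rightarrow> bool"
  assumes "is_disjoint_union_of_cycles E n"
  obtains c len where "cycle_decomposition E n c len"
proof -
  from assms obtain c :: "nat \<Rightarrow> nat \<Rightarrow> 'v" and len where
    "\<forall>i<n. 3 \<le> len i \<and> inj_on (c i) {0..<len i}"
    "\<forall>i<n. \<forall>j<n. i \<noteq> j \<longrightarrow> c i ` {0..<len i} \<inter> c j ` {0..<len j} = {}"
    "(\<Union>i<n. c i ` {0..<len i}) = UNIV"
    "\<forall>u v. E u v \<longleftrightarrow> (\<exists>i<n. \<exists>k<len i. {u, v} = {c i k, c i ((k + 1) mod len i)})"
    unfolding is_disjoint_union_of_cycles_def by (elim exE conjE)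
  then have "cycle_decomposition E n c len"
    by unfold_locales simp_all
  then show thesis
    by (rule that)
qed

theorem mainTheorem15:
  fixes E :: "20 \<Rightarrow> 20 \<Rightarrow> bool" and n :: nat
  assumes "is_disjoint_union_of_cycles E n"
  shows "rank ((- (4/15)) *\<^sub>R adjacency_matrix E + mat 1
            + (7/45) *\<^sub>R (all_ones - mat 1 - adjacency_matrix E)) = 21 - n"
proof -
  obtain c len where "cycle_decomposition E n c len"
    using cycle_decomposition_if_disjoint_union_of_cycles[OF assms] .
  then interpret cycle_decomposition E n c len .
  have "(- (4/15)) *\<^sub>R adjacency_matrix E + mat 1 + (7/45) *\<^sub>R (all_ones - mat 1 - adjacency_matrix E)
      = (7/45) *\<^sub>R all_ones + (19/45) *\<^sub>R laplacian"
    by (simp add: vec_eq_iff laplacian_def mat_def all_ones_def adjacency_matrix_def)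
  then show ?thesis
    using rank_ones_laplacian[of "7/45" "19/45"] by simp
qed

end
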